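(* Let $\mathcal{G}=(\mathcal{V},E)$ be an undirected graph, $\mathcal{V}=\{1,\dots,N\}$, let $X=(X_1,\dots,X_N)$ be a Markov random field on $\mathcal{G}$ with $X_i$ taking values in a finite alphabet $\mathcal{X}_i$, let $g_i:\mathcal{X}_i\to\mathcal{Y}_i$ be functions, and $Y_i=g_i(X_i)$, $Y=(Y_1,\dots,Y_N)$. (i) If $H(Y)=H(X)$, then $H(X_i\mid Y_i,X_{\mathcal{N}_i})=0$ for every $i\in\mathcal{V}$. (ii) If $\mathcal{G}$ is chordal and there exists a permutation $v_1,\dots,v_N$ of $\mathcal{V}$ such that, with $A_{v_i}=\mathcal{N}_{v_i}\cap\{v_1,\dots,v_{i-1}\}$, one has $H(X_{v_i}\mid Y_{v_i},X_{A_{v_i}})=0$ for every $i=1,\dots,N$, then $H(Y)=H(X)$.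
   Context: $\mathcal{N}_i$ is the set of neighbors of $i$ in $\mathcal{G}$; $X_A=(X_j,j\in A)$. $X$ is a Markov random field on $\mathcal{G}$ if for every $i$, $p_{X_i|X_{\mathcal{V}\setminus\{i\}}}=p_{X_i|X_{\mathcal{N}_i}}$. A graph is chordal if every induced cycle has length three. $H$ denotes Shannon (conditional) entropy. No positivity of $p_X$ is assumed. *)

theory Defs
  imports "HOL-Probability.Probability_Mass_Function"
begin

definition undirected_graph :: "nat set \<Rightarrow> (nat \<Rightarrow> nat \<Rightarrow> bool) \<Rightarrow> bool" where
  "undirected_graph V E \<longleftrightarrow>
     (\<forall>i j. E i j \<longrightarrow> E j i) \<and> (\<forall>i. \<not> E i i) \<and> (\<forall>i j. E i j \<longrightarrow> i \<in> V \<and> j \<in> V)"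

definition neighbors :: "nat set \<Rightarrow> (nat \<Rightarrow> nat \<Rightarrow> bool) \<Rightarrow> nat \<Rightarrow> nat set" where
  "neighbors V E i = {j \<in> V. E i j}"

definition induced_cycle :: "nat set \<Rightarrow> (nat \<Rightarrow> nat \<Rightarrow> bool) \<Rightarrow> nat list \<Rightarrow> bool" where
  "induced_cycle V E cs \<longleftrightarrow>
     (let k = length cs in
       k \<ge> 3 \<and> distinct cs \<and> set cs \<subseteq> V \<and>
       (\<forall>j<k. E (cs ! j) (cs ! ((j + 1) mod k))) \<and>
       (\<forall>j<k. \<forall>l<k. E (cs ! j) (cs ! l) \<longrightarrow> l = (j + 1) mod k \<or> j = (l + 1) mod k))"

definition chordal :: "nat set \<Rightarrow> (nat \<Rightarrow> nat \<Rightarrow> bool) \<Rightarrow> bool" where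
  "chordal V E \<longleftrightarrow> (\<forall>cs. induced_cycle V E cs \<longrightarrow> length cs = 3)"

definition entropy_rv :: "'c pmf \<Rightarrow> ('c \<Rightarrow> 'd) \<Rightarrow> real" where
  "entropy_rv p f =
     - (\<Sum>a\<in>set_pmf (map_pmf f p). pmf (map_pmf f p) a * log 2 (pmf (map_pmf f p) a))"

definition cond_entropy_rv :: "'c pmf \<Rightarrow> ('c \<Rightarrow> 'd) \<Rightarrow> ('c \<Rightarrow> 'e) \<Rightarrow> real" where
  "cond_entropy_rv p f h =
     (\<Sum>ab\<in>set_pmf (map_pmf (\<lambda>x. (f x, h x)) p).
        pmf (map_pmf (\<lambda>x. (f x, h x)) p) ab *
        log 2 (pmf (map_pmf h p) (snd ab) / pmf (map_pmf (\<lambda>x. (f x, h x)) p) ab))"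

text \<open>X_A of a configuration x (a function on vertices) is restrict x A.
The probability of the event X_A = x_A.\<close>
definition prob_eq_on :: "(nat \<Rightarrow> 'a) pmf \<Rightarrow> nat set \<Rightarrow> (nat \<Rightarrow> 'a) \<Rightarrow> real" where
  "prob_eq_on p A x = measure_pmf.prob p {y. restrict y A = restrict x A}"

text \<open>Markov random field on (V,E), no positivity assumed: for every vertex i, the
conditional law of X_i given X_{V-{i}} coincides with the conditional law of X_i given
X_{N_i}, wherever the conditioning event X_{V-{i}} = x_{V-{i}} has positive probability.\<close>
definition markov_random_field ::
  "nat set \<Rightarrow> (nat \<Rightarrow> nat \<Rightarrow> bool) \<Rightarrow> (nat \<Rightarrow> 'a) pmf \<Rightarrow> bool" where
  "markov_random_field V E p \<longleftrightarrow>
     (\<forall>i\<in>V. \<forall>x. prob_eq_on p (V - {i}) x > 0 \<longrightarrow>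
        prob_eq_on p (insert i (V - {i})) x / prob_eq_on p (V - {i}) x =
        prob_eq_on p (insert i (neighbors V E i)) x / prob_eq_on p (neighbors V E i) x)"

end

theory Submission
  imports Defs
begin

text \<open>Both parts reduce to functional dependence on the support. Since Y is a function of X,
H(X) - H(Y) is a sum of nonnegative terms a log (b / a) with a \<le> b, and so is H(f | h); hence
H(Y) = H(X) iff Y determines X, and H(f | h) = 0 iff h determines f. For (i): if x and y in the
support agree on N_i and have the same Y_i but x_i \<noteq> y_i, the Markov property puts the splice
x(i := y_i) into the support as well; it has the same image under Y as x, so Y does not
determine X. For (ii): along the ordering, each X_{v_i} is recovered from Y_{v_i} and the
already recovered X_{A_{v_i}}.\<close>

definition determines :: "'c pmf \<Rightarrow> ('c \<Rightarrow> 'e) \<Rightarrow> ('c \<Rightarrow> 'd) \<Rightarrow> bool" where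
  "determines p h f \<longleftrightarrow> (\<forall>x\<in>set_pmf p. \<forall>y\<in>set_pmf p. h x = h y \<longrightarrow> f x = f y)"

lemma finite_set_pmf_map_if_determines:
  assumes fin: "finite (set_pmf (map_pmf h p))" and det: "determines p h f"
  shows "finite (set_pmf (map_pmf f p))"
proof -
  define F where "F b = f (SOME x. x \<in> set_pmf p \<and> h x = b)" for b
  have "f x = F (h x)" if "x \<in> set_pmf p" for x
  proof -
    have "\<exists>z. z \<in> set_pmf p \<and> h z = h x" using that by blast
    then have "(SOME z. z \<in> set_pmf p \<and> h z = h x) \<in> set_pmf p \<and>
               h (SOME z. z \<in> set_pmf p \<and> h z = h x) = h x"
      by (rule someI_ex)
    then show ?thesis using det that unfolding F_def determines_def by metis
  qed
  then have "f ` set_pmf p = F ` h ` set_pmf p"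
    by (simp add: image_image cong: image_cong)
  then show ?thesis using fin by simp
qed

lemma mult_log2_div_nonneg: "0 < a \<Longrightarrow> a \<le> b \<Longrightarrow> 0 \<le> a * log 2 (b / a)"
  by simp

lemma mult_log2_div_eq_0_iff:
  assumes "0 < a" and "a \<le> b"
  shows "a * log 2 (b / a) = 0 \<longleftrightarrow> b = a"
proof -
  have "1 \<le> b / a" using assms by simp
  then have "log 2 (b / a) = 0 \<longleftrightarrow> b / a = 1"
    using zero_less_log_cancel_iff[of 2 "b / a"] by fastforce
  then show ?thesis using assms by auto
qed

lemma sum_mult_log2_div_eq_0_iff:
  assumes "finite A" and "\<forall>x\<in>A. 0 < a x \<and> a x \<le> b x"
  shows "(\<Sum>x\<in>A. a x * log 2 (b x / a x)) = 0 \<longleftrightarrow> (\<forall>x\<in>A. b x = a x)"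
proof -
  have "(\<Sum>x\<in>A. a x * log 2 (b x / a x)) = 0 \<longleftrightarrow> (\<forall>x\<in>A. a x * log 2 (b x / a x) = 0)"
    using assms by (intro sum_nonneg_eq_0_iff) (auto intro: mult_log2_div_nonneg)
  also have "\<dots> \<longleftrightarrow> (\<forall>x\<in>A. b x = a x)"
    using assms by (intro ball_cong refl mult_log2_div_eq_0_iff) auto
  finally show ?thesis .
qed

lemma pmf_map_pair_le: "pmf (map_pmf (\<lambda>x. (f x, h x)) p) (a, b) \<le> pmf (map_pmf h p) b"
  unfolding pmf_map by (rule measure_pmf.finite_measure_mono) auto

lemma pmf_map_eq_pmf_map_pair_iff:
  "pmf (map_pmf h p) b = pmf (map_pmf (\<lambda>x. (f x, h x)) p) (a, b) \<longleftrightarrow>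
     (\<forall>y\<in>set_pmf p. h y = b \<longrightarrow> f y = a)"
proof -
  have "h -` {b} = (\<lambda>x. (f x, h x)) -` {(a, b)} \<union> {y. h y = b \<and> f y \<noteq> a}"
    and "(\<lambda>x. (f x, h x)) -` {(a, b)} \<inter> {y. h y = b \<and> f y \<noteq> a} = {}"
    by auto
  then have "pmf (map_pmf h p) b =
      pmf (map_pmf (\<lambda>x. (f x, h x)) p) (a, b) + measure_pmf.prob p {y. h y = b \<and> f y \<noteq> a}"
    unfolding pmf_map by (simp add: measure_pmf.finite_measure_Union)
  then show ?thesis by (auto simp: measure_pmf_zero_iff)
qed

lemma cond_entropy_rv_eq_0_iff_determines:
  assumes fin: "finite (set_pmf (map_pmf (\<lambda>x. (f x, h x)) p))"
  shows "cond_entropy_rv p f h = 0 \<longleftrightarrow> determines p h f"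
proof -
  let ?Q = "map_pmf (\<lambda>x. (f x, h x)) p"
  have "cond_entropy_rv p f h = 0 \<longleftrightarrow>
      (\<forall>ab\<in>set_pmf ?Q. pmf (map_pmf h p) (snd ab) = pmf ?Q ab)"
    unfolding cond_entropy_rv_def
    using fin by (intro sum_mult_log2_div_eq_0_iff) (auto simp: pmf_positive pmf_map_pair_le)
  also have "\<dots> \<longleftrightarrow> (\<forall>x\<in>set_pmf p. \<forall>y\<in>set_pmf p. h y = h x \<longrightarrow> f y = f x)"
    by (simp add: pmf_map_eq_pmf_map_pair_iff)
  also have "\<dots> \<longleftrightarrow> determines p h f"
    unfolding determines_def by blast
  finally show ?thesis .
qed

lemma entropy_rv_map_pmf: "entropy_rv (map_pmf X p) G = entropy_rv p (\<lambda>x. G (X x))"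
  unfolding entropy_rv_def map_pmf_comp ..

lemma entropy_rv_eq_sum_set_pmf:
  assumes fin: "finite (set_pmf q)"
  shows "entropy_rv q G = - (\<Sum>x\<in>set_pmf q. pmf q x * log 2 (pmf (map_pmf G q) (G x)))"
proof -
  have "(\<Sum>x\<in>set_pmf q. pmf q x * log 2 (pmf (map_pmf G q) (G x))) =
      (\<Sum>y\<in>G ` set_pmf q. \<Sum>x\<in>{x \<in> set_pmf q. G x = y}. pmf q x * log 2 (pmf (map_pmf G q) (G x)))"
    by (rule sum.image_gen[OF fin])
  also have "\<dots> = (\<Sum>y\<in>G ` set_pmf q. pmf (map_pmf G q) y * log 2 (pmf (map_pmf G q) y))"
  proof (rule sum.cong[OF refl])
    fix y
    have "pmf (map_pmf G q) y = measure_pmf.prob q (G -` {y} \<inter> set_pmf q)"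
      unfolding pmf_map measure_Int_set_pmf ..
    also have "G -` {y} \<inter> set_pmf q = {x \<in> set_pmf q. G x = y}"
      by auto
    also have "measure_pmf.prob q \<dots> = (\<Sum>x\<in>{x \<in> set_pmf q. G x = y}. pmf q x)"
      using fin by (simp add: measure_measure_pmf_finite)
    finally have pmf_y: "pmf (map_pmf G q) y = (\<Sum>x\<in>{x \<in> set_pmf q. G x = y}. pmf q x)" .
    have "(\<Sum>x\<in>{x \<in> set_pmf q. G x = y}. pmf q x * log 2 (pmf (map_pmf G q) (G x))) =
        (\<Sum>x\<in>{x \<in> set_pmf q. G x = y}. pmf q x * log 2 (pmf (map_pmf G q) y))"
      by (rule sum.cong) auto
    also have "\<dots> = pmf (map_pmf G q) y * log 2 (pmf (map_pmf G q) y)"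
      unfolding pmf_y by (simp add: sum_distrib_right)
    finally show "(\<Sum>x\<in>{x \<in> set_pmf q. G x = y}. pmf q x * log 2 (pmf (map_pmf G q) (G x))) =
        pmf (map_pmf G q) y * log 2 (pmf (map_pmf G q) y)" .
  qed
  finally show ?thesis unfolding entropy_rv_def by simp
qed

lemma entropy_rv_eq_entropy_rv_id_iff_inj_on:
  assumes fin: "finite (set_pmf q)"
  shows "entropy_rv q G = entropy_rv q (\<lambda>x. x) \<longleftrightarrow> inj_on G (set_pmf q)"
proof -
  have pmf_le: "pmf q x \<le> pmf (map_pmf G q) (G x)" for x
    unfolding pmf_map measure_pmf_single[of q x, symmetric]
    by (rule measure_pmf.finite_measure_mono) auto
  have "entropy_rv q (\<lambda>x. x) - entropy_rv q G =
      (\<Sum>x\<in>set_pmf q. pmf q x * log 2 (pmf (map_pmf G q) (G x)) - pmf q x * log 2 (pmf q x))"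
    unfolding entropy_rv_eq_sum_set_pmf[OF fin] map_pmf_ident by (simp add: sum_subtractf)
  also have "\<dots> = (\<Sum>x\<in>set_pmf q. pmf q x * log 2 (pmf (map_pmf G q) (G x) / pmf q x))"
  proof (rule sum.cong[OF refl])
    fix x assume "x \<in> set_pmf q"
    then have "0 < pmf q x" and "0 < pmf (map_pmf G q) (G x)"
      using pmf_le[of x] by (auto simp: pmf_positive)
    then show "pmf q x * log 2 (pmf (map_pmf G q) (G x)) - pmf q x * log 2 (pmf q x) =
        pmf q x * log 2 (pmf (map_pmf G q) (G x) / pmf q x)"
      by (simp add: log_divide right_diff_distrib)
  qed
  finally have diff: "entropy_rv q (\<lambda>x. x) - entropy_rv q G =
      (\<Sum>x\<in>set_pmf q. pmf q x * log 2 (pmf (map_pmf G q) (G x) / pmf q x))" .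
  have "(\<Sum>x\<in>set_pmf q. pmf q x * log 2 (pmf (map_pmf G q) (G x) / pmf q x)) = 0 \<longleftrightarrow>
      (\<forall>x\<in>set_pmf q. pmf (map_pmf G q) (G x) = pmf q x)"
    using fin by (intro sum_mult_log2_div_eq_0_iff) (auto simp: pmf_positive pmf_le)
  also have "\<dots> \<longleftrightarrow> (\<forall>x\<in>set_pmf q. \<forall>y\<in>set_pmf q. G y = G x \<longrightarrow> y = x)"
  proof (rule ball_cong[OF refl])
    fix x
    have "pmf (map_pmf (\<lambda>x. (x, G x)) q) (x, G x) = pmf q x"
      using pmf_map_inj'[of "\<lambda>x. (x, G x)" q x] by (simp add: inj_on_def)
    then show "pmf (map_pmf G q) (G x) = pmf q x \<longleftrightarrow> (\<forall>y\<in>set_pmf q. G y = G x \<longrightarrow> y = x)"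
      using pmf_map_eq_pmf_map_pair_iff[of G q "G x" "\<lambda>x. x" x] by simp
  qed
  also have "\<dots> \<longleftrightarrow> inj_on G (set_pmf q)"
    unfolding inj_on_def by blast
  finally show ?thesis
    unfolding diff[symmetric] by (metis right_minus_eq)
qed

lemma entropy_rv_comp_eq_iff_determines:
  assumes "finite (set_pmf (map_pmf X p))"
  shows "entropy_rv p (\<lambda>x. G (X x)) = entropy_rv p X \<longleftrightarrow> determines p (\<lambda>x. G (X x)) X"
proof -
  have "entropy_rv p (\<lambda>x. G (X x)) = entropy_rv p X \<longleftrightarrow> inj_on G (X ` set_pmf p)"
    using entropy_rv_eq_entropy_rv_id_iff_inj_on[OF assms, of G]
    by (simp add: entropy_rv_map_pmf)
  also have "\<dots> \<longleftrightarrow> determines p (\<lambda>x. G (X x)) X"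
    unfolding inj_on_def determines_def by blast
  finally show ?thesis .
qed

lemma markov_random_field_splice_in_support:
  assumes mrf: "markov_random_field V E p" and i: "i \<in> V" and irrefl: "\<not> E i i"
    and x: "x \<in> set_pmf p" and y: "y \<in> set_pmf p"
    and agree: "\<forall>j\<in>neighbors V E i. x j = y j"
  shows "\<exists>w\<in>set_pmf p. \<forall>j\<in>V. w j = (x(i := y i)) j"
proof -
  define z where "z = x(i := y i)"
  have i_notin: "i \<notin> neighbors V E i"
    using irrefl unfolding neighbors_def by simp
  have rest: "prob_eq_on p (V - {i}) z > 0"
    unfolding prob_eq_on_def by (rule measure_pmf_posI[OF x]) (auto simp: z_def restrict_def)
  have local: "prob_eq_on p (insert i (neighbors V E i)) z > 0"
    unfolding prob_eq_on_def using agree i_notin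
    by (intro measure_pmf_posI[OF y]) (auto simp: z_def restrict_def fun_eq_iff)
  have nbrs: "prob_eq_on p (neighbors V E i) z > 0"
    unfolding prob_eq_on_def using agree i_notin
    by (intro measure_pmf_posI[OF y]) (auto simp: z_def restrict_def fun_eq_iff)
  txt \<open>P(X_V = z) = P(X_{V-{i}} = z) P(X_{{i} \<union> N_i} = z) / P(X_{N_i} = z), where x witnesses
    the first factor and y the other two.\<close>
  have "prob_eq_on p (insert i (V - {i})) z / prob_eq_on p (V - {i}) z =
      prob_eq_on p (insert i (neighbors V E i)) z / prob_eq_on p (neighbors V E i) z"
    using mrf i rest unfolding markov_random_field_def by blast
  with rest local nbrs have "prob_eq_on p V z \<noteq> 0"
    using i by (auto simp: insert_absorb)
  then obtain w where "w \<in> set_pmf p" and "restrict w V = restrict z V"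
    unfolding prob_eq_on_def measure_pmf_zero_iff by blast
  then show ?thesis
    unfolding z_def by (metis restrict_apply')
qed

lemma markov_random_field_determines_local:
  assumes mrf: "markov_random_field V E p" and i: "i \<in> V" and irrefl: "\<not> E i i"
    and det: "determines p (\<lambda>x. \<lambda>j\<in>V. g j (x j)) (\<lambda>x. restrict x V)"
  shows "determines p (\<lambda>x. (g i (x i), restrict x (neighbors V E i))) (\<lambda>x. x i)"
  unfolding determines_def
proof (intro ballI impI)
  fix x y assume x: "x \<in> set_pmf p" and y: "y \<in> set_pmf p"
    and same: "(g i (x i), restrict x (neighbors V E i)) = (g i (y i), restrict y (neighbors V E i))"
  have "\<forall>j\<in>neighbors V E i. x j = y j"
    using same by (metis prod.inject restrict_apply')
  then obtain w where w: "w \<in> set_pmf p" and w_splice: "\<forall>j\<in>V. w j = (x(i := y i)) j"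
    using markov_random_field_splice_in_support[OF mrf i irrefl x y] by blast
  have "(\<lambda>j\<in>V. g j (w j)) = (\<lambda>j\<in>V. g j (x j))"
    using w_splice same by (auto simp: fun_eq_iff)
  then have "restrict w V = restrict x V"
    using det w x unfolding determines_def by blast
  then show "x i = y i"
    using w_splice i by (metis fun_upd_same restrict_apply')
qed

lemma determines_along_ordering:
  fixes n :: nat
  assumes onto: "v ` {1..n} = V"
    and earlier: "\<forall>k\<in>{1..n}. S k \<subseteq> v ` {1..<k}"
    and step: "\<forall>k\<in>{1..n}. determines p (\<lambda>x. (g (v k) (x (v k)), restrict x (S k))) (\<lambda>x. x (v k))"
  shows "determines p (\<lambda>x. \<lambda>j\<in>V. g j (x j)) (\<lambda>x. restrict x V)"
  unfolding determines_def
proof (intro ballI impI)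
  fix x y assume x: "x \<in> set_pmf p" and y: "y \<in> set_pmf p"
    and same: "(\<lambda>j\<in>V. g j (x j)) = (\<lambda>j\<in>V. g j (y j))"
  have "k \<in> {1..n} \<longrightarrow> x (v k) = y (v k)" for k
  proof (induction k rule: less_induct)
    case (less k)
    show ?case
    proof
      assume k: "k \<in> {1..n}"
      have "\<forall>j\<in>v ` {1..<k}. x j = y j"
        using less.IH k by auto
      then have "restrict x (S k) = restrict y (S k)"
        using earlier k by (intro restrict_ext) blast
      moreover have "g (v k) (x (v k)) = g (v k) (y (v k))"
        using same onto k by (metis image_eqI restrict_apply')
      ultimately show "x (v k) = y (v k)"
        using step k x y unfolding determines_def by blast
    qed
  qed
  then show "restrict x V = restrict y V"
    using onto by (auto simp: fun_eq_iff)
qed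

lemma finite_set_pmf_map_restrict:
  assumes "finite V" and "\<forall>i\<in>V. finite (\<X> i)" and "\<forall>x\<in>set_pmf p. \<forall>i\<in>V. x i \<in> \<X> i"
  shows "finite (set_pmf (map_pmf (\<lambda>x. restrict x V) p))"
proof -
  have "(\<lambda>x. restrict x V) ` set_pmf p \<subseteq> PiE V \<X>"
    using assms(3) by auto
  moreover have "finite (PiE V \<X>)"
    using assms(1,2) by (intro finite_PiE) auto
  ultimately show ?thesis by (simp add: finite_subset)
qed

lemma entropy_rv_restrict_eq_iff_determines:
  assumes "finite (set_pmf (map_pmf (\<lambda>x. restrict x V) p))"
  shows "entropy_rv p (\<lambda>x. \<lambda>i\<in>V. g i (x i)) = entropy_rv p (\<lambda>x. restrict x V) \<longleftrightarrow>
    determines p (\<lambda>x. \<lambda>i\<in>V. g i (x i)) (\<lambda>x. restrict x V)"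
proof -
  have "(\<lambda>x. \<lambda>i\<in>V. g i (restrict x V i)) = (\<lambda>x. \<lambda>i\<in>V. g i (x i))"
    by (auto intro!: restrict_ext)
  then show ?thesis
    using entropy_rv_comp_eq_iff_determines[OF assms, of "\<lambda>r. \<lambda>i\<in>V. g i (r i)"] by simp
qed

lemma cond_entropy_rv_local_eq_0_iff_determines:
  assumes fin: "finite (set_pmf (map_pmf (\<lambda>x. restrict x V) p))" and "i \<in> V" and "S \<subseteq> V"
  shows "cond_entropy_rv p (\<lambda>x. x i) (\<lambda>x. (g i (x i), restrict x S)) = 0 \<longleftrightarrow>
    determines p (\<lambda>x. (g i (x i), restrict x S)) (\<lambda>x. x i)"
proof (rule cond_entropy_rv_eq_0_iff_determines)
  have "determines p (\<lambda>x. restrict x V) (\<lambda>x. (x i, g i (x i), restrict x S))"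
    using assms(2,3) unfolding determines_def by (metis Int_absorb1 restrict_apply' restrict_restrict)
  with fin show "finite (set_pmf (map_pmf (\<lambda>x. (x i, g i (x i), restrict x S)) p))"
    by (rule finite_set_pmf_map_if_determines)
qed

theorem proposition4:
  fixes N :: nat
    and E :: "nat \<Rightarrow> nat \<Rightarrow> bool"
    and p :: "(nat \<Rightarrow> 'a) pmf"
    and \<X> :: "nat \<Rightarrow> 'a set"
    and g :: "nat \<Rightarrow> 'a \<Rightarrow> 'b"
  assumes graph: "undirected_graph {1..N} E"
    and alph_fin: "\<forall>i\<in>{1..N}. finite (\<X> i)"
    and alph: "\<forall>x\<in>set_pmf p. \<forall>i\<in>{1..N}. x i \<in> \<X> i"
    and mrf: "markov_random_field {1..N} E p"
  shows
    "(entropy_rv p (\<lambda>x. \<lambda>i\<in>{1..N}. g i (x i)) = entropy_rv p (\<lambda>x. restrict x {1..N})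
        \<longrightarrow> (\<forall>i\<in>{1..N}. cond_entropy_rv p (\<lambda>x. x i)
                (\<lambda>x. (g i (x i), restrict x (neighbors {1..N} E i))) = 0))
     \<and>
     ((chordal {1..N} E \<and>
       (\<exists>v. bij_betw v {1..N} {1..N} \<and>
          (\<forall>i\<in>{1..N}. cond_entropy_rv p (\<lambda>x. x (v i))
              (\<lambda>x. (g (v i) (x (v i)),
                    restrict x (neighbors {1..N} E (v i) \<inter> v ` {1..<i}))) = 0)))
        \<longrightarrow> entropy_rv p (\<lambda>x. \<lambda>i\<in>{1..N}. g i (x i)) = entropy_rv p (\<lambda>x. restrict x {1..N}))"
proof -
  have fin: "finite (set_pmf (map_pmf (\<lambda>x. restrict x {1..N}) p))"
    using alph_fin alph by (intro finite_set_pmf_map_restrict) auto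
  note entropy_iff = entropy_rv_restrict_eq_iff_determines[OF fin, of g]
  note cond_iff = cond_entropy_rv_local_eq_0_iff_determines[OF fin]
  have nbrs: "neighbors {1..N} E i \<subseteq> {1..N}" for i
    unfolding neighbors_def by blast
  show ?thesis
  proof (intro conjI impI)
    assume "entropy_rv p (\<lambda>x. \<lambda>i\<in>{1..N}. g i (x i)) = entropy_rv p (\<lambda>x. restrict x {1..N})"
    then have det: "determines p (\<lambda>x. \<lambda>i\<in>{1..N}. g i (x i)) (\<lambda>x. restrict x {1..N})"
      using entropy_iff by blast
    have "\<not> E i i" for i
      using graph unfolding undirected_graph_def by blast
    then show "\<forall>i\<in>{1..N}. cond_entropy_rv p (\<lambda>x. x i)
        (\<lambda>x. (g i (x i), restrict x (neighbors {1..N} E i))) = 0"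
      using cond_iff[OF _ nbrs] markov_random_field_determines_local[OF mrf _ _ det] by blast
  next
    assume "chordal {1..N} E \<and>
       (\<exists>v. bij_betw v {1..N} {1..N} \<and>
          (\<forall>i\<in>{1..N}. cond_entropy_rv p (\<lambda>x. x (v i))
              (\<lambda>x. (g (v i) (x (v i)),
                    restrict x (neighbors {1..N} E (v i) \<inter> v ` {1..<i}))) = 0))"
    then obtain v where onto: "v ` {1..N} = {1..N}"
      and zero: "\<forall>k\<in>{1..N}. cond_entropy_rv p (\<lambda>x. x (v k))
        (\<lambda>x. (g (v k) (x (v k)), restrict x (neighbors {1..N} E (v k) \<inter> v ` {1..<k}))) = 0"
      by (auto simp: bij_betw_def)
    then have "determines p (\<lambda>x. \<lambda>i\<in>{1..N}. g i (x i)) (\<lambda>x. restrict x {1..N})"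
      using cond_iff nbrs
      by (intro determines_along_ordering[where S = "\<lambda>k. neighbors {1..N} E (v k) \<inter> v ` {1..<k}"])
        blast+
    then show "entropy_rv p (\<lambda>x. \<lambda>i\<in>{1..N}. g i (x i)) = entropy_rv p (\<lambda>x. restrict x {1..N})"
      using entropy_iff by blast
  qed
qed

end
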